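(* Let $L$ be a semiprime right Leibniz algebra over a field $\mathbb{F}$. Let $\mathscr{D}=\{(\delta,I): I\in\mathscr{J}_e(L),\ \delta\in\mathrm{PDer}(I,L)\}$ with the equivalence relation $(\delta,I)\equiv(\mu,J)$ iff there exists $K\in\mathscr{J}_e(L)$ with $K\subseteq I\cap J$ and $\delta|_K=\mu|_K$; let $Q=Q(L)=\mathscr{D}/\equiv$ and denote by $\delta_I$ the class of $(\delta,I)$. Define $p\cdot\delta_I=(p\delta)_I$ where $(p\delta)(y)=\delta(py)$; $\delta_I+\mu_J=(\delta+\mu)_{I\cap J}$ where $(\delta+\mu)(x)=\delta(x)+\mu(x)$ for $x\in I\cap J$; and $[\delta_I,\mu_J]=[\delta,\mu]_{(I\cap J)^2}$ where $[\delta,\mu]:(I\cap J)^2\to L$, $x\mapsto \mu\delta(x)-\delta\mu(x)$. Then $Q$ with these operations is a Leibniz algebra containing $L$ as a subalgebra via the monomorphism $\varphi:L\to Q$, $x\mapsto (R_x)_L$, where $R_x(y)=[y,x]$.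
   Context: A right Leibniz algebra satisfies $[x,[y,z]]=[[x,y],z]-[[x,z],y]$. An ideal $I$ is a subspace with $[I,L]\subseteq I$, $[L,I]\subseteq I$; $I^2=[I,I]$ is the span of $[x,y]$, $x,y\in I$. $L$ is semiprime if $[I,I]\neq\{0\}$ for every nonzero ideal $I$. An ideal $I$ is essential if $I\cap J\neq\{0\}$ for every nonzero ideal $J$; $\mathscr{J}_e(L)$ is the set of essential ideals of $L$. For an ideal $I$, $\mathrm{PDer}(I,L)$ is the set of partial derivations, i.e. linear maps $\delta:I\to L$ with $\delta([x,y])=[\delta(x),y]+[x,\delta(y)]$ for all $x,y\in I$. *)

theory Defs
  imports Complex_Main
begin

text \<open>The Leibniz algebra L is the whole carrier type 'a, a vector space over the
field 'k via scale, with bracket br.\<close>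

definition right_leibniz_algebra ::
  "('k::field \<Rightarrow> 'a::ab_group_add \<Rightarrow> 'a) \<Rightarrow> ('a \<Rightarrow> 'a \<Rightarrow> 'a) \<Rightarrow> bool" where
  "right_leibniz_algebra scale br \<longleftrightarrow>
     vector_space scale \<and>
     (\<forall>x. Vector_Spaces.linear scale scale (br x)) \<and>
     (\<forall>y. Vector_Spaces.linear scale scale (\<lambda>x. br x y)) \<and>
     (\<forall>x y z. br x (br y z) = br (br x y) z - br (br x z) y)"

definition lideal ::
  "('k::field \<Rightarrow> 'a::ab_group_add \<Rightarrow> 'a) \<Rightarrow> ('a \<Rightarrow> 'a \<Rightarrow> 'a) \<Rightarrow> 'a set \<Rightarrow> bool" where
  "lideal scale br I \<longleftrightarrow> module.subspace scale I \<and>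
     (\<forall>x\<in>I. \<forall>y. br x y \<in> I \<and> br y x \<in> I)"

definition lsquare ::
  "('k::field \<Rightarrow> 'a::ab_group_add \<Rightarrow> 'a) \<Rightarrow> ('a \<Rightarrow> 'a \<Rightarrow> 'a) \<Rightarrow> 'a set \<Rightarrow> 'a set" where
  "lsquare scale br I = module.span scale {br x y | x y. x \<in> I \<and> y \<in> I}"

definition semiprime ::
  "('k::field \<Rightarrow> 'a::ab_group_add \<Rightarrow> 'a) \<Rightarrow> ('a \<Rightarrow> 'a \<Rightarrow> 'a) \<Rightarrow> bool" where
  "semiprime scale br \<longleftrightarrow>
     (\<forall>I. lideal scale br I \<and> I \<noteq> {0} \<longrightarrow> lsquare scale br I \<noteq> {0})"

definition essential_ideals ::
  "('k::field \<Rightarrow> 'a::ab_group_add \<Rightarrow> 'a) \<Rightarrow> ('a \<Rightarrow> 'a \<Rightarrow> 'a) \<Rightarrow> 'a set set" where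
  "essential_ideals scale br = {I. lideal scale br I \<and>
     (\<forall>J. lideal scale br J \<and> J \<noteq> {0} \<longrightarrow> I \<inter> J \<noteq> {0})}"

text \<open>Partial derivations I -> L: maps linear on I satisfying the derivation rule on I.
A map is represented by a total function; only its values on I matter.\<close>
definition is_pder ::
  "('k::field \<Rightarrow> 'a::ab_group_add \<Rightarrow> 'a) \<Rightarrow> ('a \<Rightarrow> 'a \<Rightarrow> 'a) \<Rightarrow> 'a set \<Rightarrow> ('a \<Rightarrow> 'a) \<Rightarrow> bool" where
  "is_pder scale br I \<delta> \<longleftrightarrow>
     (\<forall>x\<in>I. \<forall>y\<in>I. \<delta> (x + y) = \<delta> x + \<delta> y) \<and>
     (\<forall>c. \<forall>x\<in>I. \<delta> (scale c x) = scale c (\<delta> x)) \<and>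
     (\<forall>x\<in>I. \<forall>y\<in>I. \<delta> (br x y) = br (\<delta> x) y + br x (\<delta> y))"

definition pairsD ::
  "('k::field \<Rightarrow> 'a::ab_group_add \<Rightarrow> 'a) \<Rightarrow> ('a \<Rightarrow> 'a \<Rightarrow> 'a) \<Rightarrow> (('a \<Rightarrow> 'a) \<times> 'a set) set" where
  "pairsD scale br = {(\<delta>, I). I \<in> essential_ideals scale br \<and> is_pder scale br I \<delta>}"

definition qrel ::
  "('k::field \<Rightarrow> 'a::ab_group_add \<Rightarrow> 'a) \<Rightarrow> ('a \<Rightarrow> 'a \<Rightarrow> 'a) \<Rightarrow> ((('a \<Rightarrow> 'a) \<times> 'a set) \<times> (('a \<Rightarrow> 'a) \<times> 'a set)) set" where
  "qrel scale br = {((\<delta>, I), (\<mu>, J)). (\<delta>, I) \<in> pairsD scale br \<and> (\<mu>, J) \<in> pairsD scale br \<and>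
     (\<exists>K \<in> essential_ideals scale br. K \<subseteq> I \<inter> J \<and> (\<forall>x\<in>K. \<delta> x = \<mu> x))}"

definition Qmart ::
  "('k::field \<Rightarrow> 'a::ab_group_add \<Rightarrow> 'a) \<Rightarrow> ('a \<Rightarrow> 'a \<Rightarrow> 'a) \<Rightarrow> (('a \<Rightarrow> 'a) \<times> 'a set) set set" where
  "Qmart scale br = pairsD scale br // qrel scale br"

definition qcls ::
  "('k::field \<Rightarrow> 'a::ab_group_add \<Rightarrow> 'a) \<Rightarrow> ('a \<Rightarrow> 'a \<Rightarrow> 'a) \<Rightarrow> ('a \<Rightarrow> 'a) \<Rightarrow> 'a set \<Rightarrow> (('a \<Rightarrow> 'a) \<times> 'a set) set" where
  "qcls scale br \<delta> I = qrel scale br `` {(\<delta>, I)}"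

definition qscale ::
  "('k::field \<Rightarrow> 'a::ab_group_add \<Rightarrow> 'a) \<Rightarrow> ('a \<Rightarrow> 'a \<Rightarrow> 'a) \<Rightarrow> 'k \<Rightarrow> (('a \<Rightarrow> 'a) \<times> 'a set) set \<Rightarrow> (('a \<Rightarrow> 'a) \<times> 'a set) set" where
  "qscale scale br p A = (let (\<delta>, I) = (SOME r. r \<in> A) in qcls scale br (\<lambda>y. \<delta> (scale p y)) I)"

definition qadd ::
  "('k::field \<Rightarrow> 'a::ab_group_add \<Rightarrow> 'a) \<Rightarrow> ('a \<Rightarrow> 'a \<Rightarrow> 'a) \<Rightarrow> (('a \<Rightarrow> 'a) \<times> 'a set) set \<Rightarrow> (('a \<Rightarrow> 'a) \<times> 'a set) set \<Rightarrow> (('a \<Rightarrow> 'a) \<times> 'a set) set" where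
  "qadd scale br A B = (let (\<delta>, I) = (SOME r. r \<in> A); (\<mu>, J) = (SOME r. r \<in> B)
     in qcls scale br (\<lambda>x. \<delta> x + \<mu> x) (I \<inter> J))"

definition qbr ::
  "('k::field \<Rightarrow> 'a::ab_group_add \<Rightarrow> 'a) \<Rightarrow> ('a \<Rightarrow> 'a \<Rightarrow> 'a) \<Rightarrow> (('a \<Rightarrow> 'a) \<times> 'a set) set \<Rightarrow> (('a \<Rightarrow> 'a) \<times> 'a set) set \<Rightarrow> (('a \<Rightarrow> 'a) \<times> 'a set) set" where
  "qbr scale br A B = (let (\<delta>, I) = (SOME r. r \<in> A); (\<mu>, J) = (SOME r. r \<in> B)
     in qcls scale br (\<lambda>x. \<mu> (\<delta> x) - \<delta> (\<mu> x)) (lsquare scale br (I \<inter> J)))"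

definition qphi ::
  "('k::field \<Rightarrow> 'a::ab_group_add \<Rightarrow> 'a) \<Rightarrow> ('a \<Rightarrow> 'a \<Rightarrow> 'a) \<Rightarrow> 'a \<Rightarrow> (('a \<Rightarrow> 'a) \<times> 'a set) set" where
  "qphi scale br x = qcls scale br (\<lambda>y. br y x) UNIV"

text \<open>A (right) Leibniz algebra structure on a carrier set S with given operations:
the vector space axioms over 'k (with some zero and additive inverses inside S),
bilinearity of the bracket, and the right Leibniz identity written without subtraction.\<close>
definition leibniz_algebra_on ::
  "'s set \<Rightarrow> ('s \<Rightarrow> 's \<Rightarrow> 's) \<Rightarrow> ('k::field \<Rightarrow> 's \<Rightarrow> 's) \<Rightarrow> ('s \<Rightarrow> 's \<Rightarrow> 's) \<Rightarrow> bool" where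
  "leibniz_algebra_on S add sc b \<longleftrightarrow>
     (\<forall>a\<in>S. \<forall>c\<in>S. add a c \<in> S) \<and>
     (\<forall>k. \<forall>a\<in>S. sc k a \<in> S) \<and>
     (\<forall>a\<in>S. \<forall>c\<in>S. b a c \<in> S) \<and>
     (\<forall>a\<in>S. \<forall>c\<in>S. \<forall>d\<in>S. add (add a c) d = add a (add c d)) \<and>
     (\<forall>a\<in>S. \<forall>c\<in>S. add a c = add c a) \<and>
     (\<exists>z\<in>S. (\<forall>a\<in>S. add z a = a) \<and> (\<forall>a\<in>S. \<exists>a'\<in>S. add a a' = z)) \<and>
     (\<forall>k. \<forall>a\<in>S. \<forall>c\<in>S. sc k (add a c) = add (sc k a) (sc k c)) \<and>
     (\<forall>k l. \<forall>a\<in>S. sc (k + l) a = add (sc k a) (sc l a)) \<and>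
     (\<forall>k l. \<forall>a\<in>S. sc k (sc l a) = sc (k * l) a) \<and>
     (\<forall>a\<in>S. sc 1 a = a) \<and>
     (\<forall>a\<in>S. \<forall>c\<in>S. \<forall>d\<in>S. b (add a c) d = add (b a d) (b c d)) \<and>
     (\<forall>a\<in>S. \<forall>c\<in>S. \<forall>d\<in>S. b a (add c d) = add (b a c) (b a d)) \<and>
     (\<forall>k. \<forall>a\<in>S. \<forall>c\<in>S. b (sc k a) c = sc k (b a c) \<and> b a (sc k c) = sc k (b a c)) \<and>
     (\<forall>a\<in>S. \<forall>c\<in>S. \<forall>d\<in>S. add (b a (b c d)) (b (b a d) c) = b (b a c) d)"

end

theory Submission
  imports Defs
begin

text \<open>
  A partial derivation \<open>\<delta> : I \<rightarrow> L\<close> maps the square \<open>N\<^sup>2\<close> of every ideal \<open>N \<subseteq> I\<close> into \<open>N\<close>,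
  since \<open>\<delta>[a,b] = [\<delta>a,b] + [a,\<delta>b]\<close>. So on the square of the intersection of their domains two
  partial derivations can be composed, and their commutator is again a partial derivation. Essential
  ideals are closed under intersection and, by semiprimeness, under squaring; hence each algebra law,
  being a pointwise identity between compositions of the representing maps, holds on some essential
  ideal, which is equality in \<open>Q\<close>. The same argument shows that the operations do not depend on the
  chosen representatives. The embedding is injective because in a semiprime algebra the right
  annihilator \<open>A\<close> of an essential ideal \<open>K\<close> vanishes: \<open>A \<inter> K\<close> is an ideal with zero square.
\<close>

locale right_leibniz = vector_space scale
  for scale :: "'k::field \<Rightarrow> 'a::ab_group_add \<Rightarrow> 'a" +
  fixes br :: "'a \<Rightarrow> 'a \<Rightarrow> 'a"
  assumes linear_br_right: "Vector_Spaces.linear scale scale (br x)"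
    and linear_br_left: "Vector_Spaces.linear scale scale (\<lambda>x. br x y)"
    and leibniz: "br x (br y z) = br (br x y) z - br (br x z) y"
begin

lemma module_hom_br: "module_hom scale scale (br x)" "module_hom scale scale (\<lambda>x. br x y)"
  using linear_br_right linear_br_left by (simp_all add: linear_iff_module_hom)

lemmas br_add_right = module_hom.add[OF module_hom_br(1)]
  and br_scale_right = module_hom.scale[OF module_hom_br(1)]
  and br_diff_right = module_hom.diff[OF module_hom_br(1)]
  and br_zero_right[simp] = module_hom.zero[OF module_hom_br(1)]
  and br_add_left = module_hom.add[OF module_hom_br(2)]
  and br_scale_left = module_hom.scale[OF module_hom_br(2)]
  and br_diff_left = module_hom.diff[OF module_hom_br(2)]
  and br_zero_left[simp] = module_hom.zero[OF module_hom_br(2)]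

abbreviation ideal :: "'a set \<Rightarrow> bool" where "ideal \<equiv> lideal scale br"
abbreviation sq :: "'a set \<Rightarrow> 'a set" where "sq \<equiv> lsquare scale br"
abbreviation Ess :: "'a set set" where "Ess \<equiv> essential_ideals scale br"
abbreviation pder :: "'a set \<Rightarrow> ('a \<Rightarrow> 'a) \<Rightarrow> bool" where "pder \<equiv> is_pder scale br"
abbreviation Pairs where "Pairs \<equiv> pairsD scale br"
abbreviation rel where "rel \<equiv> qrel scale br"
abbreviation cls where "cls \<equiv> qcls scale br"
abbreviation Q where "Q \<equiv> Qmart scale br"
abbreviation addQ where "addQ \<equiv> qadd scale br"
abbreviation scaleQ where "scaleQ \<equiv> qscale scale br"
abbreviation brQ where "brQ \<equiv> qbr scale br"
abbreviation phi where "phi \<equiv> qphi scale br"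

subsection \<open>Ideals and their squares\<close>

lemma ideal_zero: "ideal I \<Longrightarrow> 0 \<in> I"
  by (simp add: lideal_def subspace_0)

lemma ideal_add: "ideal I \<Longrightarrow> x \<in> I \<Longrightarrow> y \<in> I \<Longrightarrow> x + y \<in> I"
  by (simp add: lideal_def subspace_add)

lemma ideal_diff: "ideal I \<Longrightarrow> x \<in> I \<Longrightarrow> y \<in> I \<Longrightarrow> x - y \<in> I"
  by (simp add: lideal_def subspace_diff)

lemma ideal_scale: "ideal I \<Longrightarrow> x \<in> I \<Longrightarrow> scale c x \<in> I"
  by (simp add: lideal_def subspace_scale)

lemma ideal_br_left: "ideal I \<Longrightarrow> x \<in> I \<Longrightarrow> br x y \<in> I"
  by (simp add: lideal_def)

lemma ideal_br_right: "ideal I \<Longrightarrow> x \<in> I \<Longrightarrow> br y x \<in> I"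
  by (simp add: lideal_def)

lemma ideal_inter: "ideal I \<Longrightarrow> ideal J \<Longrightarrow> ideal (I \<inter> J)"
  unfolding lideal_def subspace_def by auto

lemma ideal_UNIV: "ideal UNIV"
  by (simp add: lideal_def)

lemma sq_subset: "ideal I \<Longrightarrow> sq I \<subseteq> I"
  unfolding lsquare_def by (rule span_minimal) (auto simp: lideal_def)

lemma sq_mono: "I \<subseteq> J \<Longrightarrow> sq I \<subseteq> sq J"
  unfolding lsquare_def by (rule span_mono) blast

lemma ideal_sq:
  assumes I: "ideal I"
  shows "ideal (sq I)"
proof -
  let ?S = "{br x y | x y. x \<in> I \<and> y \<in> I}"
  have "\<forall>l. br x l \<in> span ?S \<and> br l x \<in> span ?S" if "x \<in> span ?S" for x
    using that
  proof (induction rule: span_induct)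
    case base
    show ?case
      by (rule subspaceI)
        (auto simp: br_add_left br_add_right br_scale_left br_scale_right span_add span_scale span_zero)
  next
    case (step x)
    then obtain a b where ab: "x = br a b" "a \<in> I" "b \<in> I" by blast
    show ?case
    proof
      fix l
      have "br x l = br a (br b l) + br (br a l) b" and "br l x = br (br l a) b - br (br l b) a"
        using ab leibniz[of a b l] leibniz[of l a b] by simp_all
      moreover have "br a (br b l) \<in> ?S" "br (br a l) b \<in> ?S" "br (br l a) b \<in> ?S" "br (br l b) a \<in> ?S"
        using ab I by (auto intro: ideal_br_left ideal_br_right)
      ultimately show "br x l \<in> span ?S \<and> br l x \<in> span ?S"
        by (simp add: span_add span_diff span_base)
    qed
  qed
  then show ?thesis
    unfolding lideal_def lsquare_def by simp
qed

subsection \<open>Partial derivations\<close>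

lemma pder_add: "pder I d \<Longrightarrow> x \<in> I \<Longrightarrow> y \<in> I \<Longrightarrow> d (x + y) = d x + d y"
  by (simp add: is_pder_def)

lemma pder_scale: "pder I d \<Longrightarrow> x \<in> I \<Longrightarrow> d (scale c x) = scale c (d x)"
  by (simp add: is_pder_def)

lemma pder_br: "pder I d \<Longrightarrow> x \<in> I \<Longrightarrow> y \<in> I \<Longrightarrow> d (br x y) = br (d x) y + br x (d y)"
  by (simp add: is_pder_def)

lemma pder_zero: "pder I d \<Longrightarrow> 0 \<in> I \<Longrightarrow> d 0 = 0"
  using pder_scale[of I d 0 0] by simp

lemma pder_diff:
  assumes "pder I d" "ideal I" "x \<in> I" "y \<in> I"
  shows "d (x - y) = d x - d y"
  using pder_add[OF assms(1) ideal_diff[OF assms(2-4)] assms(4)] by (simp add: eq_diff_eq)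

lemma pder_maps_sq:
  assumes d: "pder I d" and N: "ideal N" "N \<subseteq> I" and x: "x \<in> sq N"
  shows "d x \<in> N"
proof -
  have "x \<in> N \<and> d x \<in> N" if "x \<in> span {br a b | a b. a \<in> N \<and> b \<in> N}" for x
    using that
  proof (induction rule: span_induct)
    case base
    have "d 0 = 0"
      using pder_zero[OF d] ideal_zero[OF N(1)] N(2) by blast
    then show ?case
      using d N by (intro subspaceI)
        (auto simp: ideal_zero ideal_add ideal_scale pder_scale[OF d] pder_add[OF d] subsetD[OF N(2)])
  next
    case (step x)
    then obtain a b where x: "x = br a b" and ab: "a \<in> N" "b \<in> N"
      by blast
    then have "d x = br (d a) b + br a (d b)"
      using pder_br[OF d] N(2) by blast
    then show ?case
      using x ab N(1) by (simp add: ideal_add ideal_br_left ideal_br_right)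
  qed
  then show ?thesis
    using x unfolding lsquare_def by blast
qed

lemma pder_prescale:
  assumes d: "pder I d" and I: "ideal I"
  shows "pder I (\<lambda>y. d (scale p y))"
  unfolding is_pder_def
proof (intro conjI ballI allI)
  fix x y assume x: "x \<in> I" and y: "y \<in> I"
  show "d (scale p (x + y)) = d (scale p x) + d (scale p y)"
    using pder_add[OF d ideal_scale[OF I x] ideal_scale[OF I y]] by (simp add: scale_right_distrib)
  have "d (scale p (br x y)) = d (br (scale p x) y)"
    by (simp add: br_scale_left)
  also have "\<dots> = br (d (scale p x)) y + br x (d (scale p y))"
    using pder_br[OF d ideal_scale[OF I x] y] pder_scale[OF d y] by (simp add: br_scale_left br_scale_right)
  finally show "d (scale p (br x y)) = br (d (scale p x)) y + br x (d (scale p y))" .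
next
  fix c x assume x: "x \<in> I"
  have "scale p (scale c x) = scale c (scale p x)"
    by (simp add: mult.commute)
  then show "d (scale p (scale c x)) = scale c (d (scale p x))"
    by (simp only: pder_scale[OF d ideal_scale[OF I x]])
qed

lemma pder_sum:
  assumes d: "pder I d" and e: "pder J e"
  shows "pder (I \<inter> J) (\<lambda>x. d x + e x)"
  using assms unfolding is_pder_def
  by (simp add: br_add_left br_add_right scale_right_distrib algebra_simps)

lemma pder_commutator:
  assumes d: "pder I d" and e: "pder J e" and I: "ideal I" and J: "ideal J"
  shows "pder (sq (I \<inter> J)) (\<lambda>x. e (d x) - d (e x))"
proof -
  have IJ: "ideal (I \<inter> J)"
    using I J by (rule ideal_inter)
  have dom: "x \<in> I" "x \<in> J" if "x \<in> sq (I \<inter> J)" for x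
    using that sq_subset[OF IJ] by auto
  have img: "d x \<in> J" "e x \<in> I" if "x \<in> sq (I \<inter> J)" for x
    using pder_maps_sq[OF d IJ _ that] pder_maps_sq[OF e IJ _ that] by auto
  show ?thesis
    unfolding is_pder_def
  proof (intro conjI ballI allI)
    fix x y assume x: "x \<in> sq (I \<inter> J)" and y: "y \<in> sq (I \<inter> J)"
    show "e (d (x + y)) - d (e (x + y)) = e (d x) - d (e x) + (e (d y) - d (e y))"
      using dom[OF x] dom[OF y] img[OF x] img[OF y]
      by (simp add: pder_add[OF d] pder_add[OF e] algebra_simps)
    have "br (d x) y \<in> J" "br x (d y) \<in> J" "br (e x) y \<in> I" "br x (e y) \<in> I"
      using dom[OF x] dom[OF y] I J by (auto intro: ideal_br_left ideal_br_right)
    then show "e (d (br x y)) - d (e (br x y)) = br (e (d x) - d (e x)) y + br x (e (d y) - d (e y))"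
      using dom[OF x] dom[OF y] img[OF x] img[OF y]
      by (simp add: pder_br[OF d] pder_br[OF e] pder_add[OF d] pder_add[OF e] br_diff_left br_diff_right
          algebra_simps)
  next
    fix c x assume x: "x \<in> sq (I \<inter> J)"
    show "e (d (scale c x)) - d (e (scale c x)) = scale c (e (d x) - d (e x))"
      using dom[OF x] img[OF x] by (simp add: pder_scale[OF d] pder_scale[OF e] scale_right_diff_distrib)
  qed
qed

lemma pder_right_mult: "pder UNIV (\<lambda>y. br y x)"
  unfolding is_pder_def
  using leibniz[of _ _ x] by (simp add: br_add_left br_scale_left algebra_simps)

subsection \<open>Essential ideals\<close>

lemma essential_ideal: "I \<in> Ess \<Longrightarrow> ideal I"
  by (simp add: essential_ideals_def)

lemma essential_inter:
  assumes I: "I \<in> Ess" and J: "J \<in> Ess"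
  shows "I \<inter> J \<in> Ess"
proof -
  have "I \<inter> (J \<inter> K) \<noteq> {0}" if "ideal K" "K \<noteq> {0}" for K
    using that assms essential_ideal[OF J] ideal_inter unfolding essential_ideals_def by blast
  then show ?thesis
    using assms by (auto simp: essential_ideals_def Int_assoc intro: ideal_inter)
qed

lemma essential_UNIV: "UNIV \<in> Ess"
  by (simp add: essential_ideals_def ideal_UNIV)

definition right_annihilator :: "'a set \<Rightarrow> 'a set" where
  "right_annihilator K = {w. \<forall>k\<in>K. br k w = 0}"

lemma ideal_right_annihilator:
  assumes K: "ideal K"
  shows "ideal (right_annihilator K)"
  unfolding lideal_def
proof (intro conjI ballI allI)
  show "subspace (right_annihilator K)"
    by (rule subspaceI) (auto simp: right_annihilator_def br_add_right br_scale_right)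
next
  fix w l assume w: "w \<in> right_annihilator K"
  have "br k l \<in> K" if "k \<in> K" for k
    using K that by (rule ideal_br_left)
  then show "br w l \<in> right_annihilator K" "br l w \<in> right_annihilator K"
    using w leibniz[of _ w l] leibniz[of _ l w] by (auto simp: right_annihilator_def)
qed

subsection \<open>The quotient \<open>Q\<close> and its linear structure\<close>

lemma pairs_iff: "(d, I) \<in> Pairs \<longleftrightarrow> I \<in> Ess \<and> pder I d"
  by (simp add: pairsD_def)

lemma rel_iff: "((d, I), (e, J)) \<in> rel \<longleftrightarrow> (d, I) \<in> Pairs \<and> (e, J) \<in> Pairs \<and>
   (\<exists>K\<in>Ess. K \<subseteq> I \<inter> J \<and> (\<forall>x\<in>K. d x = e x))"
  by (simp add: qrel_def)

lemma pairs_essential: "(d, I) \<in> Pairs \<Longrightarrow> I \<in> Ess"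
  by (simp add: pairs_iff)

lemma pairs_pder: "(d, I) \<in> Pairs \<Longrightarrow> pder I d"
  by (simp add: pairs_iff)

lemma pairs_ideal: "(d, I) \<in> Pairs \<Longrightarrow> ideal I"
  by (simp add: pairs_iff essential_ideal)

lemma pairs_prescale: "(d, I) \<in> Pairs \<Longrightarrow> (\<lambda>y. d (scale p y), I) \<in> Pairs"
  by (simp add: pairs_iff pder_prescale essential_ideal)

lemma pairs_sum: "(d, I) \<in> Pairs \<Longrightarrow> (e, J) \<in> Pairs \<Longrightarrow> (\<lambda>x. d x + e x, I \<inter> J) \<in> Pairs"
  by (simp add: pairs_iff pder_sum essential_inter)

lemma pairs_zero: "(\<lambda>_. 0, UNIV) \<in> Pairs"
  by (simp add: pairs_iff essential_UNIV is_pder_def)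

lemma pairs_right_mult: "(\<lambda>y. br y x, UNIV) \<in> Pairs"
  by (simp add: pairs_iff essential_UNIV pder_right_mult)

lemma equiv_rel: "equiv Pairs rel"
proof (rule equivI)
  show "rel \<subseteq> Pairs \<times> Pairs"
    by (auto simp: qrel_def)
  show "refl_on Pairs rel"
  proof (rule refl_onI, clarify)
    fix d I assume "(d, I) \<in> Pairs"
    then show "((d, I), (d, I)) \<in> rel"
      unfolding rel_iff pairs_iff by blast
  qed
  show "sym rel"
  proof (rule symI, clarify)
    fix d I e J assume "((d, I), (e, J)) \<in> rel"
    then show "((e, J), (d, I)) \<in> rel"
      unfolding rel_iff by (metis inf_commute)
  qed
  show "trans rel"
  proof (rule transI, clarify)
    fix d I e J f K
    assume "((d, I), (e, J)) \<in> rel" "((e, J), (f, K)) \<in> rel"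
    then obtain K1 K2 where "K1 \<in> Ess" "K2 \<in> Ess" "K1 \<subseteq> I \<inter> J" "K2 \<subseteq> J \<inter> K"
      "\<forall>x\<in>K1. d x = e x" "\<forall>x\<in>K2. e x = f x" "(d, I) \<in> Pairs" "(f, K) \<in> Pairs"
      unfolding rel_iff by blast
    then show "((d, I), (f, K)) \<in> rel"
      unfolding rel_iff by (intro conjI bexI[of _ "K1 \<inter> K2"] essential_inter) auto
  qed
qed

lemma cls_eqI:
  assumes "(d, I) \<in> Pairs" "(e, J) \<in> Pairs" "K \<in> Ess" "K \<subseteq> I" "K \<subseteq> J"
    and "\<And>x. x \<in> K \<Longrightarrow> d x = e x"
  shows "cls d I = cls e J"
proof -
  have "((d, I), (e, J)) \<in> rel"
    using assms unfolding rel_iff by (intro conjI bexI[of _ K]) auto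
  then show ?thesis
    unfolding qcls_def by (rule equiv_class_eq[OF equiv_rel])
qed

lemma cls_in_Q: "(d, I) \<in> Pairs \<Longrightarrow> cls d I \<in> Q"
  unfolding Qmart_def qcls_def by (rule quotientI)

lemma Q_cases:
  assumes "A \<in> Q"
  obtains d I where "(d, I) \<in> Pairs" "A = cls d I"
  using assms unfolding Qmart_def qcls_def by (auto elim!: quotientE)

lemma cls_some_rep:
  assumes "(d, I) \<in> Pairs"
  obtains d' I' K where "(SOME r. r \<in> cls d I) = (d', I')" "(d', I') \<in> Pairs"
    "K \<in> Ess" "K \<subseteq> I \<inter> I'" "\<forall>x\<in>K. d x = d' x"
proof -
  obtain d' I' where rep: "(SOME r. r \<in> cls d I) = (d', I')"
    by (cases "SOME r. r \<in> cls d I")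
  have "(d, I) \<in> cls d I"
    unfolding qcls_def by (rule equiv_class_self[OF equiv_rel assms])
  then have "(d', I') \<in> cls d I"
    unfolding rep[symmetric] by (rule someI)
  then have "((d, I), (d', I')) \<in> rel"
    unfolding qcls_def by simp
  then have "(d', I') \<in> Pairs" "\<exists>K\<in>Ess. K \<subseteq> I \<inter> I' \<and> (\<forall>x\<in>K. d x = d' x)"
    unfolding rel_iff by simp_all
  with rep show ?thesis
    using that by blast
qed

lemma scaleQ_cls:
  assumes "(d, I) \<in> Pairs"
  shows "scaleQ p (cls d I) = cls (\<lambda>y. d (scale p y)) I"
proof -
  obtain d' I' K where rep: "(SOME r. r \<in> cls d I) = (d', I')" and d': "(d', I') \<in> Pairs"
    and K: "K \<in> Ess" "K \<subseteq> I \<inter> I'" "\<forall>x\<in>K. d x = d' x"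
    using cls_some_rep[OF assms] .
  have "scale p x \<in> K" if "x \<in> K" for x
    using essential_ideal[OF K(1)] that by (rule ideal_scale)
  then have "cls (\<lambda>y. d' (scale p y)) I' = cls (\<lambda>y. d (scale p y)) I"
    using K by (intro cls_eqI[OF pairs_prescale[OF d'] pairs_prescale[OF assms] K(1)]) auto
  then show ?thesis
    unfolding qscale_def rep Let_def prod.case .
qed

lemma addQ_cls:
  assumes "(d, I) \<in> Pairs" "(e, J) \<in> Pairs"
  shows "addQ (cls d I) (cls e J) = cls (\<lambda>x. d x + e x) (I \<inter> J)"
proof -
  obtain d' I' K where rep1: "(SOME r. r \<in> cls d I) = (d', I')" and d': "(d', I') \<in> Pairs"
    and K: "K \<in> Ess" "K \<subseteq> I \<inter> I'" "\<forall>x\<in>K. d x = d' x"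
    using cls_some_rep[OF assms(1)] .
  obtain e' J' K' where rep2: "(SOME r. r \<in> cls e J) = (e', J')" and e': "(e', J') \<in> Pairs"
    and K': "K' \<in> Ess" "K' \<subseteq> J \<inter> J'" "\<forall>x\<in>K'. e x = e' x"
    using cls_some_rep[OF assms(2)] .
  have "cls (\<lambda>x. d' x + e' x) (I' \<inter> J') = cls (\<lambda>x. d x + e x) (I \<inter> J)"
    using K K' by (intro cls_eqI[where K = "K \<inter> K'"] pairs_sum d' e' assms essential_inter) auto
  then show ?thesis
    unfolding qadd_def rep1 rep2 Let_def prod.case .
qed

lemma addQ_assoc:
  assumes d: "(d, I) \<in> Pairs" and e: "(e, J) \<in> Pairs" and g: "(g, K) \<in> Pairs"
  shows "addQ (addQ (cls d I) (cls e J)) (cls g K) = addQ (cls d I) (addQ (cls e J) (cls g K))"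
  unfolding addQ_cls[OF d e] addQ_cls[OF e g] addQ_cls[OF pairs_sum[OF d e] g]
    addQ_cls[OF d pairs_sum[OF e g]]
  by (rule cls_eqI[OF pairs_sum[OF pairs_sum[OF d e] g] pairs_sum[OF d pairs_sum[OF e g]]
        pairs_essential[OF pairs_sum[OF pairs_sum[OF d e] g]]])
    (auto simp: add.assoc)

lemma addQ_commute:
  assumes d: "(d, I) \<in> Pairs" and e: "(e, J) \<in> Pairs"
  shows "addQ (cls d I) (cls e J) = addQ (cls e J) (cls d I)"
  unfolding addQ_cls[OF d e] addQ_cls[OF e d]
  by (rule cls_eqI[OF pairs_sum[OF d e] pairs_sum[OF e d] pairs_essential[OF pairs_sum[OF d e]]])
    (auto simp: add.commute)

lemma addQ_zero_left:
  assumes d: "(d, I) \<in> Pairs"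
  shows "addQ (cls (\<lambda>_. 0) UNIV) (cls d I) = cls d I"
  unfolding addQ_cls[OF pairs_zero d]
  by (rule cls_eqI[OF pairs_sum[OF pairs_zero d] d pairs_essential[OF d]]) auto

lemma addQ_scaleQ_minus_one:
  assumes d: "(d, I) \<in> Pairs"
  shows "addQ (cls d I) (scaleQ (-1) (cls d I)) = cls (\<lambda>_. 0) UNIV"
  unfolding scaleQ_cls[OF d] addQ_cls[OF d pairs_prescale[OF d]]
  by (rule cls_eqI[OF pairs_sum[OF d pairs_prescale[OF d]] pairs_zero pairs_essential[OF d]])
    (auto simp: pder_scale[OF pairs_pder[OF d], of _ "-1", simplified])

lemma scaleQ_addQ:
  assumes "(d, I) \<in> Pairs" "(e, J) \<in> Pairs"
  shows "scaleQ k (addQ (cls d I) (cls e J)) = addQ (scaleQ k (cls d I)) (scaleQ k (cls e J))"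
  using assms by (simp add: addQ_cls scaleQ_cls pairs_sum pairs_prescale)

lemma scaleQ_add_left:
  assumes d: "(d, I) \<in> Pairs"
  shows "scaleQ (k + l) (cls d I) = addQ (scaleQ k (cls d I)) (scaleQ l (cls d I))"
  unfolding scaleQ_cls[OF d] addQ_cls[OF pairs_prescale[OF d] pairs_prescale[OF d]]
  using ideal_scale[OF essential_ideal[OF pairs_essential[OF d]]]
  by (intro cls_eqI[OF pairs_prescale[OF d] pairs_sum[OF pairs_prescale[OF d] pairs_prescale[OF d]]
        pairs_essential[OF d]])
    (auto simp: scale_left_distrib pder_add[OF pairs_pder[OF d]])

lemma scaleQ_scaleQ:
  assumes "(d, I) \<in> Pairs"
  shows "scaleQ k (scaleQ l (cls d I)) = scaleQ (k * l) (cls d I)"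
  using assms by (simp add: scaleQ_cls pairs_prescale mult.commute)

lemma scaleQ_one:
  assumes "(d, I) \<in> Pairs"
  shows "scaleQ 1 (cls d I) = cls d I"
  using assms by (simp add: scaleQ_cls)

end

locale semiprime_right_leibniz = right_leibniz +
  assumes semiprime: "semiprime scale br"
begin

subsection \<open>The bracket of \<open>Q\<close> and the embedding of \<open>L\<close>\<close>

lemma essential_sq:
  assumes K: "K \<in> Ess"
  shows "sq K \<in> Ess"
proof -
  have "sq K \<inter> J \<noteq> {0}" if J: "ideal J" "J \<noteq> {0}" for J
  proof -
    have KJ: "ideal (K \<inter> J)"
      using essential_ideal[OF K] J(1) by (rule ideal_inter)
    have "K \<inter> J \<noteq> {0}"
      using K J by (simp add: essential_ideals_def)
    then have "sq (K \<inter> J) \<noteq> {0}"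
      using semiprime KJ by (simp add: semiprime_def)
    then obtain x where "x \<in> sq (K \<inter> J)" "x \<noteq> 0"
      using ideal_zero[OF ideal_sq[OF KJ]] by blast
    moreover have "sq (K \<inter> J) \<subseteq> sq K \<inter> J"
      using sq_mono[of "K \<inter> J" K] sq_subset[OF KJ] by blast
    ultimately show ?thesis
      by blast
  qed
  then show ?thesis
    using ideal_sq[OF essential_ideal[OF K]] by (simp add: essential_ideals_def)
qed

lemma right_annihilator_essential:
  assumes K: "K \<in> Ess"
  shows "right_annihilator K = {0}"
proof -
  let ?A = "right_annihilator K"
  have A: "ideal ?A"
    using essential_ideal[OF K] by (rule ideal_right_annihilator)
  have AK: "ideal (?A \<inter> K)"
    using A essential_ideal[OF K] by (rule ideal_inter)
  have "sq (?A \<inter> K) \<subseteq> {0}"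
    unfolding lsquare_def by (rule span_minimal) (auto simp: right_annihilator_def)
  then have "sq (?A \<inter> K) = {0}"
    using ideal_zero[OF ideal_sq[OF AK]] by blast
  then have "K \<inter> ?A = {0}"
    using semiprime AK unfolding semiprime_def by (auto simp: Int_commute)
  then show ?thesis
    using K A unfolding essential_ideals_def by blast
qed

lemma pairs_commutator:
  "(d, I) \<in> Pairs \<Longrightarrow> (e, J) \<in> Pairs \<Longrightarrow> (\<lambda>x. e (d x) - d (e x), sq (I \<inter> J)) \<in> Pairs"
  by (simp add: pairs_iff pder_commutator essential_ideal essential_sq essential_inter)

lemma brQ_cls:
  assumes d: "(d, I) \<in> Pairs" and e: "(e, J) \<in> Pairs"
  shows "brQ (cls d I) (cls e J) = cls (\<lambda>x. e (d x) - d (e x)) (sq (I \<inter> J))"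
proof -
  obtain d' I' K where rep1: "(SOME r. r \<in> cls d I) = (d', I')" and d': "(d', I') \<in> Pairs"
    and K: "K \<in> Ess" "K \<subseteq> I \<inter> I'" "\<forall>x\<in>K. d x = d' x"
    using cls_some_rep[OF d] .
  obtain e' J' K' where rep2: "(SOME r. r \<in> cls e J) = (e', J')" and e': "(e', J') \<in> Pairs"
    and K': "K' \<in> Ess" "K' \<subseteq> J \<inter> J'" "\<forall>x\<in>K'. e x = e' x"
    using cls_some_rep[OF e] .
  define N where "N = K \<inter> K'"
  have N: "N \<in> Ess" "ideal N"
    unfolding N_def using K(1) K'(1) by (simp_all add: essential_inter essential_ideal)
  have NI: "N \<subseteq> I \<inter> J" "N \<subseteq> I' \<inter> J'"
    using K(2) K'(2) unfolding N_def by auto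
  have "d x = d' x" "e x = e' x" "d (e x) = d' (e' x)" "e (d x) = e' (d' x)" if "x \<in> sq N" for x
  proof -
    have "x \<in> N" "d x \<in> N" "e x \<in> N"
      using pder_maps_sq[OF pairs_pder[OF d] N(2) _ that] pder_maps_sq[OF pairs_pder[OF e] N(2) _ that]
        sq_subset[OF N(2)] that NI(1) by auto
    then show "d x = d' x" "e x = e' x" "d (e x) = d' (e' x)" "e (d x) = e' (d' x)"
      using K(3) K'(3) unfolding N_def by auto
  qed
  then have "cls (\<lambda>x. e' (d' x) - d' (e' x)) (sq (I' \<inter> J')) = cls (\<lambda>x. e (d x) - d (e x)) (sq (I \<inter> J))"
    using sq_mono[OF NI(1)] sq_mono[OF NI(2)]
    by (intro cls_eqI[OF pairs_commutator[OF d' e'] pairs_commutator[OF d e] essential_sq[OF N(1)]]) auto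
  then show ?thesis
    unfolding qbr_def rep1 rep2 Let_def prod.case .
qed

lemma brQ_addQ_left:
  assumes d: "(d, I) \<in> Pairs" and e: "(e, J) \<in> Pairs" and g: "(g, K) \<in> Pairs"
  shows "brQ (addQ (cls d I) (cls e J)) (cls g K) = addQ (brQ (cls d I) (cls g K)) (brQ (cls e J) (cls g K))"
proof -
  define M where "M = I \<inter> J \<inter> K"
  have M: "ideal M"
    unfolding M_def by (intro ideal_inter pairs_ideal[OF d] pairs_ideal[OF e] pairs_ideal[OF g])
  have "g (d x + e x) = g (d x) + g (e x)" if "x \<in> sq M" for x
  proof -
    have "d x \<in> M" "e x \<in> M"
      using pder_maps_sq[OF pairs_pder[OF d] M _ that] pder_maps_sq[OF pairs_pder[OF e] M _ that]
      unfolding M_def by auto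
    then show ?thesis
      using pder_add[OF pairs_pder[OF g]] unfolding M_def by auto
  qed
  moreover have "sq M \<subseteq> sq (I \<inter> K)" "sq M \<subseteq> sq (J \<inter> K)"
    unfolding M_def by (intro sq_mono; blast)+
  ultimately show ?thesis
    unfolding addQ_cls[OF d e] brQ_cls[OF pairs_sum[OF d e] g] brQ_cls[OF d g] brQ_cls[OF e g]
      addQ_cls[OF pairs_commutator[OF d g] pairs_commutator[OF e g]]
    by (intro cls_eqI[OF pairs_commutator[OF pairs_sum[OF d e] g]
          pairs_sum[OF pairs_commutator[OF d g] pairs_commutator[OF e g]]
          pairs_essential[OF pairs_commutator[OF pairs_sum[OF d e] g]]])
      (auto simp: M_def)
qed

lemma brQ_addQ_right:
  assumes d: "(d, I) \<in> Pairs" and e: "(e, J) \<in> Pairs" and g: "(g, K) \<in> Pairs"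
  shows "brQ (cls d I) (addQ (cls e J) (cls g K)) = addQ (brQ (cls d I) (cls e J)) (brQ (cls d I) (cls g K))"
proof -
  define M where "M = I \<inter> (J \<inter> K)"
  have M: "ideal M"
    unfolding M_def by (intro ideal_inter pairs_ideal[OF d] pairs_ideal[OF e] pairs_ideal[OF g])
  have "d (e x + g x) = d (e x) + d (g x)" if "x \<in> sq M" for x
  proof -
    have "e x \<in> M" "g x \<in> M"
      using pder_maps_sq[OF pairs_pder[OF e] M _ that] pder_maps_sq[OF pairs_pder[OF g] M _ that]
      unfolding M_def by auto
    then show ?thesis
      using pder_add[OF pairs_pder[OF d]] unfolding M_def by auto
  qed
  moreover have "sq M \<subseteq> sq (I \<inter> J)" "sq M \<subseteq> sq (I \<inter> K)"
    unfolding M_def by (intro sq_mono; blast)+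
  ultimately show ?thesis
    unfolding addQ_cls[OF e g] brQ_cls[OF d pairs_sum[OF e g]] brQ_cls[OF d e] brQ_cls[OF d g]
      addQ_cls[OF pairs_commutator[OF d e] pairs_commutator[OF d g]]
    by (intro cls_eqI[OF pairs_commutator[OF d pairs_sum[OF e g]]
          pairs_sum[OF pairs_commutator[OF d e] pairs_commutator[OF d g]]
          pairs_essential[OF pairs_commutator[OF d pairs_sum[OF e g]]]])
      (auto simp: M_def)
qed

lemma brQ_scaleQ_left:
  assumes d: "(d, I) \<in> Pairs" and e: "(e, J) \<in> Pairs"
  shows "brQ (scaleQ k (cls d I)) (cls e J) = scaleQ k (brQ (cls d I) (cls e J))"
proof -
  have "x \<in> J" if "x \<in> sq (I \<inter> J)" for x
    using sq_subset[OF ideal_inter[OF pairs_ideal[OF d] pairs_ideal[OF e]]] that by auto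
  then show ?thesis
    unfolding scaleQ_cls[OF d] brQ_cls[OF pairs_prescale[OF d] e] brQ_cls[OF d e]
      scaleQ_cls[OF pairs_commutator[OF d e]]
    by (intro cls_eqI[OF pairs_commutator[OF pairs_prescale[OF d] e]
          pairs_prescale[OF pairs_commutator[OF d e]] pairs_essential[OF pairs_commutator[OF d e]]])
      (auto simp: pder_scale[OF pairs_pder[OF e]])
qed

lemma brQ_scaleQ_right:
  assumes d: "(d, I) \<in> Pairs" and e: "(e, J) \<in> Pairs"
  shows "brQ (cls d I) (scaleQ k (cls e J)) = scaleQ k (brQ (cls d I) (cls e J))"
proof -
  have "x \<in> I" if "x \<in> sq (I \<inter> J)" for x
    using sq_subset[OF ideal_inter[OF pairs_ideal[OF d] pairs_ideal[OF e]]] that by auto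
  then show ?thesis
    unfolding scaleQ_cls[OF e] brQ_cls[OF d pairs_prescale[OF e]] brQ_cls[OF d e]
      scaleQ_cls[OF pairs_commutator[OF d e]]
    by (intro cls_eqI[OF pairs_commutator[OF d pairs_prescale[OF e]]
          pairs_prescale[OF pairs_commutator[OF d e]] pairs_essential[OF pairs_commutator[OF d e]]])
      (auto simp: pder_scale[OF pairs_pder[OF d]])
qed

lemma brQ_leibniz:
  assumes d: "(d, I) \<in> Pairs" and e: "(e, J) \<in> Pairs" and g: "(g, K) \<in> Pairs"
  shows "addQ (brQ (cls d I) (brQ (cls e J) (cls g K))) (brQ (brQ (cls d I) (cls g K)) (cls e J))
       = brQ (brQ (cls d I) (cls e J)) (cls g K)"
proof -
  define M where "M = I \<inter> J \<inter> K"
  have M: "ideal M" "M \<in> Ess"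
    unfolding M_def using d e g by (meson ideal_inter essential_inter pairs_ideal pairs_essential)+
  have MI: "M \<subseteq> I" "M \<subseteq> J" "M \<subseteq> K" and sqM: "ideal (sq M)" "sq M \<subseteq> M"
    unfolding M_def using ideal_sq[OF M(1)] sq_subset[OF M(1)] by (auto simp: M_def)
  have "g (e (d x)) - e (g (d x)) - d (g (e x) - e (g x)) + (e (g (d x) - d (g x)) - (g (d (e x)) - d (g (e x))))
      = g (e (d x) - d (e x)) - (e (d (g x)) - d (e (g x)))" if x: "x \<in> sq (sq M)" for x
  proof -
    have "d x \<in> sq M" "e x \<in> sq M" "g x \<in> sq M"
      using pder_maps_sq[OF pairs_pder[OF d] sqM(1) _ x] pder_maps_sq[OF pairs_pder[OF e] sqM(1) _ x]
        pder_maps_sq[OF pairs_pder[OF g] sqM(1) _ x] sqM(2) MI by auto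
    then have "d (e x) \<in> M" "d (g x) \<in> M" "e (d x) \<in> M" "e (g x) \<in> M" "g (d x) \<in> M" "g (e x) \<in> M"
      using pder_maps_sq[OF pairs_pder[OF d] M(1) MI(1)] pder_maps_sq[OF pairs_pder[OF e] M(1) MI(2)]
        pder_maps_sq[OF pairs_pder[OF g] M(1) MI(3)] by auto
    then have "g (e x) \<in> I" "e (g x) \<in> I" "g (d x) \<in> J" "d (g x) \<in> J" "e (d x) \<in> K" "d (e x) \<in> K"
      using MI by auto
    then show ?thesis
      by (simp add: pder_diff[OF pairs_pder[OF d] pairs_ideal[OF d]] pder_diff[OF pairs_pder[OF e] pairs_ideal[OF e]]
          pder_diff[OF pairs_pder[OF g] pairs_ideal[OF g]] algebra_simps)
  qed
  moreover have "sq M \<subseteq> I \<inter> sq (J \<inter> K)" "sq M \<subseteq> sq (I \<inter> K) \<inter> J" "sq M \<subseteq> sq (I \<inter> J) \<inter> K"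
    using sqM(2) MI sq_mono[of M "J \<inter> K"] sq_mono[of M "I \<inter> K"] sq_mono[of M "I \<inter> J"]
    unfolding M_def by auto
  then have "sq (sq M) \<subseteq> sq (I \<inter> sq (J \<inter> K)) \<inter> sq (sq (I \<inter> K) \<inter> J)"
    and "sq (sq M) \<subseteq> sq (sq (I \<inter> J) \<inter> K)"
    by (metis le_inf_iff sq_mono)+
  ultimately show ?thesis
    unfolding brQ_cls[OF e g] brQ_cls[OF d pairs_commutator[OF e g]] brQ_cls[OF d g]
      brQ_cls[OF pairs_commutator[OF d g] e] brQ_cls[OF d e] brQ_cls[OF pairs_commutator[OF d e] g]
      addQ_cls[OF pairs_commutator[OF d pairs_commutator[OF e g]] pairs_commutator[OF pairs_commutator[OF d g] e]]
    by (intro cls_eqI[OF pairs_sum[OF pairs_commutator[OF d pairs_commutator[OF e g]]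
          pairs_commutator[OF pairs_commutator[OF d g] e]]
          pairs_commutator[OF pairs_commutator[OF d e] g] essential_sq[OF essential_sq[OF M(2)]]]) auto
qed

lemma leibniz_algebra_on_Q: "leibniz_algebra_on Q addQ scaleQ brQ"
proof -
  have closed: "addQ a b \<in> Q" "scaleQ k a \<in> Q" "brQ a b \<in> Q" if "a \<in> Q" "b \<in> Q" for a b k
    using that by (auto elim!: Q_cases simp: addQ_cls scaleQ_cls brQ_cls
        intro!: cls_in_Q pairs_sum pairs_prescale pairs_commutator)
  have "\<exists>z\<in>Q. (\<forall>a\<in>Q. addQ z a = a) \<and> (\<forall>a\<in>Q. \<exists>a'\<in>Q. addQ a a' = z)"
  proof (rule bexI[of _ "cls (\<lambda>_. 0) UNIV"], intro conjI ballI)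
    show "cls (\<lambda>_. 0) UNIV \<in> Q"
      by (rule cls_in_Q[OF pairs_zero])
    show "addQ (cls (\<lambda>_. 0) UNIV) a = a" if "a \<in> Q" for a
      using that by (auto elim: Q_cases simp: addQ_zero_left)
    show "\<exists>a'\<in>Q. addQ a a' = cls (\<lambda>_. 0) UNIV" if "a \<in> Q" for a
    proof (rule bexI)
      show "scaleQ (-1) a \<in> Q"
        using closed(2)[OF that that] .
      show "addQ a (scaleQ (-1) a) = cls (\<lambda>_. 0) UNIV"
        using that by (auto elim: Q_cases simp: addQ_scaleQ_minus_one)
    qed
  qed
  then show ?thesis
    unfolding leibniz_algebra_on_def using closed
    by (auto elim!: Q_cases simp: addQ_assoc addQ_commute scaleQ_addQ scaleQ_add_left scaleQ_scaleQ
        scaleQ_one brQ_addQ_left brQ_addQ_right brQ_scaleQ_left brQ_scaleQ_right brQ_leibniz)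
qed

lemma phi_in_Q: "phi x \<in> Q"
  unfolding qphi_def by (rule cls_in_Q[OF pairs_right_mult])

lemma inj_phi: "inj phi"
proof (rule injI)
  fix x y assume "phi x = phi y"
  then have "((\<lambda>z. br z x, UNIV), (\<lambda>z. br z y, UNIV)) \<in> rel"
    unfolding qphi_def qcls_def using eq_equiv_class_iff[OF equiv_rel pairs_right_mult pairs_right_mult]
    by blast
  then obtain K where "K \<in> Ess" "\<forall>k\<in>K. br k x = br k y"
    unfolding rel_iff by blast
  then have "x - y \<in> right_annihilator K" "right_annihilator K = {0}"
    by (simp_all add: right_annihilator_def br_diff_right right_annihilator_essential[of K, symmetric])
  then show "x = y"
    by simp
qed

lemma phi_add: "phi (x + y) = addQ (phi x) (phi y)"
  unfolding qphi_def addQ_cls[OF pairs_right_mult pairs_right_mult] by (simp add: br_add_right)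

lemma phi_scale: "phi (scale p x) = scaleQ p (phi x)"
  unfolding qphi_def scaleQ_cls[OF pairs_right_mult] by (simp add: br_scale_left br_scale_right)

lemma phi_br: "phi (br x y) = brQ (phi x) (phi y)"
  unfolding qphi_def brQ_cls[OF pairs_right_mult pairs_right_mult]
  by (rule cls_eqI[OF pairs_right_mult pairs_commutator[OF pairs_right_mult pairs_right_mult]
        essential_sq[OF essential_UNIV]]) (auto simp: leibniz)

end

theorem theorem4p4:
  fixes scale :: "'k::field \<Rightarrow> 'a::ab_group_add \<Rightarrow> 'a"
    and br :: "'a \<Rightarrow> 'a \<Rightarrow> 'a"
  assumes "right_leibniz_algebra scale br"
    and "semiprime scale br"
  shows
    "equiv (pairsD scale br) (qrel scale br) \<and>
     (\<forall>\<delta> I \<mu> J p. (\<delta>, I) \<in> pairsD scale br \<longrightarrow> (\<mu>, J) \<in> pairsD scale br \<longrightarrow>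
         (\<lambda>y. \<delta> (scale p y), I) \<in> pairsD scale br \<and>
         (\<lambda>x. \<delta> x + \<mu> x, I \<inter> J) \<in> pairsD scale br \<and>
         (\<lambda>x. \<mu> (\<delta> x) - \<delta> (\<mu> x), lsquare scale br (I \<inter> J)) \<in> pairsD scale br) \<and>
     (\<forall>\<delta> I \<mu> J p. (\<delta>, I) \<in> pairsD scale br \<longrightarrow> (\<mu>, J) \<in> pairsD scale br \<longrightarrow>
         qscale scale br p (qcls scale br \<delta> I) = qcls scale br (\<lambda>y. \<delta> (scale p y)) I \<and>
         qadd scale br (qcls scale br \<delta> I) (qcls scale br \<mu> J)
           = qcls scale br (\<lambda>x. \<delta> x + \<mu> x) (I \<inter> J) \<and>
         qbr scale br (qcls scale br \<delta> I) (qcls scale br \<mu> J)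
           = qcls scale br (\<lambda>x. \<mu> (\<delta> x) - \<delta> (\<mu> x)) (lsquare scale br (I \<inter> J))) \<and>
     leibniz_algebra_on (Qmart scale br) (qadd scale br) (qscale scale br) (qbr scale br) \<and>
     (\<forall>x. qphi scale br x \<in> Qmart scale br) \<and>
     inj (qphi scale br) \<and>
     (\<forall>x y. qphi scale br (x + y) = qadd scale br (qphi scale br x) (qphi scale br y)) \<and>
     (\<forall>p x. qphi scale br (scale p x) = qscale scale br p (qphi scale br x)) \<and>
     (\<forall>x y. qphi scale br (br x y) = qbr scale br (qphi scale br x) (qphi scale br y))"
proof -
  interpret semiprime_right_leibniz scale br
    using assms unfolding right_leibniz_algebra_def semiprime_right_leibniz_def
      semiprime_right_leibniz_axioms_def right_leibniz_def right_leibniz_axioms_def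
    by blast
  show ?thesis
    by (simp add: equiv_rel pairs_prescale pairs_sum pairs_commutator scaleQ_cls addQ_cls brQ_cls
        leibniz_algebra_on_Q phi_in_Q inj_phi phi_add phi_scale phi_br)
qed

end
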